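(* Let $d\ge2$ and let $K$ be a positive integer. For each $x\in[0,1]$ fix one binary expansion $x=\sum_{j\ge1}a_j^x2^{-j}$, $a_j^x\in\{0,1\}$, and define $\phi_K(x)=\sum_{j=1}^K2a_j^x3^{-d(j-1)}$. Suppose $f:[0,1]^d\to\mathbb{R}$ satisfies $|f(\mathbf x)-f(\mathbf y)|\le Q|\mathbf x-\mathbf y|_\infty^\beta$ for all $\mathbf x,\mathbf y\in[0,1]^d$, for some $0<\beta\le1$ and $Q\ge0$. Then there exists a function $g:\mathcal C\to\mathbb{R}$ on the Cantor set $\mathcal C$ such that $|g(x)-g(y)|\le2^\beta Q|x-y|^{\frac{\beta\log2}{d\log3}}$ for all $x,y\in\mathcal C$, $$\Big|f(\mathbf x)-g\Big(\sum_{p=1}^d3^{-p}\phi_K(x_p)\Big)\Big|\le Q\,2^{-\beta(K-4)}\qquad\text{for all }\mathbf x=(x_1,\ldots,x_d)\in[0,1]^d$$ (note $\sum_{p=1}^d3^{-p}\phi_K(x_p)\in\mathcal C$), and $\sup_{\mathbf x\in[0,1]^d}|f(\mathbf x)|=\sup_{z\in\mathcal C}|g(z)|$.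
   Context: $|\cdot|_\infty$ denotes the maximum norm on $\mathbb{R}^d$. The Cantor set $\mathcal C\subset[0,1]$ is the set of numbers having a ternary expansion using only the digits $0$ and $2$. *)

theory Defs
  imports "HOL-Analysis.Analysis"
begin

definition cantor_set :: "real set" where
  "cantor_set = {x. \<exists>c::nat \<Rightarrow> nat. (\<forall>j. c j \<in> {0, 2}) \<and>
                     (\<lambda>j. real (c j) / 3 ^ (Suc j)) sums x}"

definition unit_cube :: "nat \<Rightarrow> (nat \<Rightarrow> real) set" where
  "unit_cube d = PiE {1..d} (\<lambda>_. {0..1})"

definition dist_inf :: "nat \<Rightarrow> (nat \<Rightarrow> real) \<Rightarrow> (nat \<Rightarrow> real) \<Rightarrow> real" where
  "dist_inf d x y = Max ((\<lambda>p. \<bar>x p - y p\<bar>) ` {1..d})"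

text \<open>a x j (j \<ge> 1) is the j-th binary digit of the fixed expansion of x.\<close>
definition binary_expansion_choice :: "(real \<Rightarrow> nat \<Rightarrow> nat) \<Rightarrow> bool" where
  "binary_expansion_choice a \<longleftrightarrow>
     (\<forall>x\<in>{0..1}. (\<forall>j. a x j \<in> {0, 1}) \<and>
        (\<lambda>j. real (a x (Suc j)) / 2 ^ (Suc j)) sums x)"

definition phiK :: "nat \<Rightarrow> (real \<Rightarrow> nat \<Rightarrow> nat) \<Rightarrow> nat \<Rightarrow> real \<Rightarrow> real" where
  "phiK d a K x = (\<Sum>j=1..K. 2 * real (a x j) / 3 ^ (d * (j - 1)))"

end

theory Submission imports Defs begin

text \<open>Writing the binary digits of the d coordinates of x, doubled and interleaved, as one ternary
  expansion with digits 0 and 2 encodes x as a point of the Cantor set; reading the digits back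
  is a map T from the Cantor set onto the cube, and g = f \<circ> T. Two Cantor points whose ternary
  digits first differ at position m are at least 3^-(m+1) apart, while every coordinate of their
  images shares the first m div d binary digits, so T is H\<ouml>lder with exponent
  log 2 / (d log 3) and constant 2. The sum of the phi_K is the code of x with all binary digits
  after the K-th erased, which T maps to within 2^-K of x. Surjectivity of T gives the
  equality of the suprema.\<close>

lemma geometric_majorant:
  fixes e :: "nat \<Rightarrow> real"
  assumes r: "0 < r" "r < 1" and bound: "\<And>k. \<bar>e k\<bar> \<le> C * r ^ k"
  shows "summable e" and "\<bar>suminf e\<bar> \<le> C / (1 - r)"
proof -
  have geom: "summable (\<lambda>k. C * r ^ k)"
    using r by (intro summable_mult summable_geometric) simp
  have abs: "summable (\<lambda>k. \<bar>e k\<bar>)"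
    using bound geom by (intro summable_rabs_comparison_test[of e "\<lambda>k. C * r ^ k"]) auto
  then show "summable e" by (rule summable_rabs_cancel)
  have "\<bar>suminf e\<bar> \<le> (\<Sum>k. \<bar>e k\<bar>)" using abs by (rule summable_rabs)
  also have "\<dots> \<le> (\<Sum>k. C * r ^ k)" using abs geom bound by (intro suminf_le) auto
  also have "\<dots> = C / (1 - r)" using r by (simp add: suminf_mult suminf_geometric)
  finally show "\<bar>suminf e\<bar> \<le> C / (1 - r)" .
qed

definition digit_value :: "nat \<Rightarrow> (nat \<Rightarrow> nat) \<Rightarrow> real" where
  "digit_value b c = (\<Sum>k. real (c k) / real b ^ Suc k)"

lemma summable_digit_series:
  assumes "1 < b" and "\<forall>k. c k < b"
  shows "summable (\<lambda>k. real (c k) / real b ^ Suc k)"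
proof (rule geometric_majorant(1))
  fix k
  have "real (c k) / real b ^ Suc k \<le> real b / real b ^ Suc k"
    using assms by (intro divide_right_mono) (auto simp: less_imp_le)
  then show "\<bar>real (c k) / real b ^ Suc k\<bar> \<le> 1 * (1 / real b) ^ k"
    using assms(1) by (simp add: power_one_over)
qed (use assms in auto)

lemma
  assumes "1 < b" and "\<forall>k. c k < b" and "\<forall>k. c' k < b"
  shows summable_digit_diff: "summable (\<lambda>k. (real (c k) - real (c' k)) / real b ^ Suc k)"
    and digit_value_diff:
      "digit_value b c - digit_value b c' = (\<Sum>k. (real (c k) - real (c' k)) / real b ^ Suc k)"
proof -
  have "summable (\<lambda>k. real (c k) / real b ^ Suc k)" "summable (\<lambda>k. real (c' k) / real b ^ Suc k)"
    using summable_digit_series[OF assms(1,2)] summable_digit_series[OF assms(1,3)] .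
  then show "summable (\<lambda>k. (real (c k) - real (c' k)) / real b ^ Suc k)"
    and "digit_value b c - digit_value b c' = (\<Sum>k. (real (c k) - real (c' k)) / real b ^ Suc k)"
    unfolding digit_value_def diff_divide_distrib by (auto intro: summable_diff suminf_diff)
qed

lemma digit_value_close:
  assumes b: "1 < b" and c: "\<forall>k. c k < b" and c': "\<forall>k. c' k < b"
    and agree: "\<forall>k<N. c k = c' k"
  shows "\<bar>digit_value b c - digit_value b c'\<bar> \<le> 1 / real b ^ N"
proof -
  define e where "e k = (real (c k) - real (c' k)) / real b ^ Suc k" for k
  have "summable e"
    unfolding e_def by (rule summable_digit_diff[OF b c c'])
  then have "e sums (digit_value b c - digit_value b c')"
    unfolding digit_value_diff[OF b c c'] e_def[symmetric] by (rule summable_sums)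
  then have "(\<lambda>k. e (k + N)) sums (digit_value b c - digit_value b c')"
    by (subst sums_zero_iff_shift) (auto simp: e_def agree)
  then have eq: "digit_value b c - digit_value b c' = (\<Sum>k. e (k + N))"
    by (rule sums_unique)
  have "\<bar>e (k + N)\<bar> \<le> (real b - 1) / real b ^ Suc N * (1 / real b) ^ k" for k
  proof -
    have "\<bar>real (c (k + N)) - real (c' (k + N))\<bar> \<le> real b - 1"
    proof -
      have "c (k + N) + 1 \<le> b" "c' (k + N) + 1 \<le> b"
        using c c' by (auto simp: Suc_le_eq)
      then show ?thesis by (simp add: abs_le_iff flip: of_nat_le_iff)
    qed
    then show ?thesis
      using b by (simp add: e_def abs_divide power_add power_one_over divide_right_mono mult_ac)
  qed
  from geometric_majorant(2)[OF _ _ this] b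
  have "\<bar>\<Sum>k. e (k + N)\<bar> \<le> (real b - 1) / real b ^ Suc N / (1 - 1 / real b)"
    by simp
  also have "\<dots> = 1 / real b ^ N"
    using b by (simp add: field_simps)
  finally show ?thesis
    unfolding eq .
qed

lemma digit_value_update:
  assumes b: "1 < b" and c: "\<forall>k. c k < b" and "x < b"
  shows "digit_value b (c(m := x)) - digit_value b c = (real x - real (c m)) / real b ^ Suc m"
proof -
  have "\<forall>k. (c(m := x)) k < b"
    using c \<open>x < b\<close> by simp
  then have "digit_value b (c(m := x)) - digit_value b c
      = (\<Sum>k. (real ((c(m := x)) k) - real (c k)) / real b ^ Suc k)"
    by (rule digit_value_diff[OF b _ c])
  also have "\<dots> = (\<Sum>k. if k = m then (real x - real (c m)) / real b ^ Suc m else 0)"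
    by (intro suminf_cong) simp
  also have "\<dots> = (real x - real (c m)) / real b ^ Suc m"
    using sums_single[of m "\<lambda>_. (real x - real (c m)) / real b ^ Suc m"]
    by (rule sums_unique[symmetric])
  finally show ?thesis .
qed

lemma first_difference:
  fixes f g :: "nat \<Rightarrow> 'a"
  assumes "f \<noteq> g"
  obtains m where "f m \<noteq> g m" and "\<forall>k<m. f k = g k"
  using assms exists_least_iff[of "\<lambda>m. f m \<noteq> g m"] by auto

definition cantor_digits :: "(nat \<Rightarrow> nat) \<Rightarrow> bool" where
  "cantor_digits c \<longleftrightarrow> (\<forall>j. c j \<in> {0, 2})"

lemma cantor_digits_less:
  assumes "cantor_digits c"
  shows "\<forall>k. c k < 3"
proof
  fix k
  have "c k = 0 \<or> c k = 2"
    using assms unfolding cantor_digits_def by blast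
  then show "c k < 3"
    by auto
qed

lemma cantor_set_iff: "z \<in> cantor_set \<longleftrightarrow> (\<exists>c. cantor_digits c \<and> digit_value 3 c = z)"
proof -
  have "(\<lambda>j. real (c j) / 3 ^ Suc j) sums z \<longleftrightarrow> digit_value 3 c = z" if "cantor_digits c" for c
    using summable_digit_series[of 3 c] cantor_digits_less[OF that]
    by (auto simp: digit_value_def sums_iff)
  then show ?thesis
    unfolding cantor_set_def cantor_digits_def by blast
qed

text \<open>Changing the first differing digit of c' to that of c costs exactly 2/3^(m+1), while the
  result agrees with c up to m and so lies within 1/3^(m+1) of it.\<close>

lemma digit_value_cantor_separation:
  assumes c: "cantor_digits c" and c': "cantor_digits c'"
    and differ: "c m \<noteq> c' m" and agree: "\<forall>k<m. c k = c' k"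
  shows "1 / 3 ^ Suc m \<le> \<bar>digit_value 3 c - digit_value 3 c'\<bar>"
proof -
  define c'' where "c'' = c'(m := c m)"
  have less: "\<forall>k. c k < 3" "\<forall>k. c' k < 3"
    using c c' by (auto dest: cantor_digits_less)
  then have less'': "\<forall>k. c'' k < 3"
    by (simp add: c''_def)
  have "\<forall>k<Suc m. c k = c'' k"
    using agree by (simp add: c''_def less_Suc_eq)
  then have close: "\<bar>digit_value 3 c - digit_value 3 c''\<bar> \<le> 1 / 3 ^ Suc m"
    using digit_value_close[of 3 c c'' "Suc m"] less(1) less'' by simp
  have "c m \<in> {0, 2}" "c' m \<in> {0, 2}"
    using c c' unfolding cantor_digits_def by auto
  then have "\<bar>real (c m) - real (c' m)\<bar> = 2"
    using differ by auto
  then have far: "\<bar>digit_value 3 c'' - digit_value 3 c'\<bar> = 2 / 3 ^ Suc m"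
    using digit_value_update[of 3 c' "c m" m] less unfolding c''_def
    by (simp only: abs_divide) simp
  from close far show ?thesis
    by linarith
qed

lemma cantor_digits_unique:
  assumes "cantor_digits c" "cantor_digits c'" and "digit_value 3 c = digit_value 3 c'"
  shows "c = c'"
proof (rule ccontr)
  assume "c \<noteq> c'"
  then obtain m where "c m \<noteq> c' m" "\<forall>k<m. c k = c' k"
    by (rule first_difference)
  from digit_value_cantor_separation[OF assms(1,2) this] assms(3)
  have "1 / 3 ^ Suc m \<le> (0::real)"
    by simp
  moreover have "0 < 1 / (3::real) ^ Suc m"
    by simp
  ultimately show False
    by linarith
qed

definition cantor_digit :: "real \<Rightarrow> nat \<Rightarrow> nat" where
  "cantor_digit z = (SOME c. cantor_digits c \<and> digit_value 3 c = z)"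

lemma cantor_digit:
  assumes "z \<in> cantor_set"
  shows "cantor_digits (cantor_digit z)" and "digit_value 3 (cantor_digit z) = z"
  using someI_ex[OF assms[unfolded cantor_set_iff]] unfolding cantor_digit_def by auto

lemma cantor_digit_digit_value:
  assumes "cantor_digits c"
  shows "cantor_digit (digit_value 3 c) = c"
proof -
  have "digit_value 3 c \<in> cantor_set"
    unfolding cantor_set_iff using assms by blast
  from cantor_digit[OF this] show ?thesis
    using assms by (intro cantor_digits_unique)
qed

lemma digit_value_in_unit_interval:
  assumes "1 < b" and "\<forall>k. c k < b"
  shows "digit_value b c \<in> {0..1}"
  unfolding atLeastAtMost_iff
proof
  show "0 \<le> digit_value b c"
    unfolding digit_value_def by (intro suminf_nonneg summable_digit_series assms) auto
  have "\<bar>digit_value b c - digit_value b (\<lambda>_. 0)\<bar> \<le> 1 / real b ^ 0"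
    using assms by (intro digit_value_close) auto
  then show "digit_value b c \<le> 1"
    by (simp add: digit_value_def)
qed

lemma dist_inf_le:
  assumes "d \<ge> 1" and "\<And>p. p \<in> {1..d} \<Longrightarrow> \<bar>x p - y p\<bar> \<le> B"
  shows "dist_inf d x y \<le> B"
  unfolding dist_inf_def using assms by (subst Max_le_iff) auto

lemma dist_inf_nonneg: "d \<ge> 1 \<Longrightarrow> 0 \<le> dist_inf d x y"
  unfolding dist_inf_def by (rule order.trans[OF _ Max_ge[of _ "\<bar>x 1 - y 1\<bar>"]]) auto

text \<open>Ternary digit i of interleave d bits carries binary digit i div d + 1 of coordinate
  i mod d + 1; cantor_to_cube reads these back. The restriction to {1..d} makes its values
  extensional, as the points of unit_cube are.\<close>

definition cantor_to_cube :: "nat \<Rightarrow> real \<Rightarrow> nat \<Rightarrow> real" where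
  "cantor_to_cube d z =
     restrict (\<lambda>p. digit_value 2 (\<lambda>k. cantor_digit z (d * k + (p - 1)) div 2)) {1..d}"

definition interleave :: "nat \<Rightarrow> (nat \<Rightarrow> nat \<Rightarrow> nat) \<Rightarrow> nat \<Rightarrow> nat" where
  "interleave d bits i = 2 * bits (i mod d + 1) (i div d + 1)"

lemma interleave_index: "q < d \<Longrightarrow> interleave d bits (d * k + q) = 2 * bits (Suc q) (Suc k)"
  unfolding interleave_def by simp

lemma cantor_digit_half_less:
  assumes "z \<in> cantor_set"
  shows "cantor_digit z i div 2 < 2"
proof -
  have "cantor_digit z i < 3"
    using cantor_digits_less[OF cantor_digit(1)[OF assms]] by blast
  then have "cantor_digit z i < 2 * 2"
    by simp
  then show ?thesis
    by (rule less_mult_imp_div_less)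
qed

lemma cantor_to_cube_in_unit_cube:
  assumes "z \<in> cantor_set"
  shows "cantor_to_cube d z \<in> unit_cube d"
  unfolding cantor_to_cube_def unit_cube_def restrict_PiE_iff
  using cantor_digit_half_less[OF assms] by (intro ballI digit_value_in_unit_interval) auto

lemma
  assumes d: "d \<ge> 1" and bits: "\<forall>p\<in>{1..d}. \<forall>j. bits p j < 2"
  shows cantor_digits_interleave: "cantor_digits (interleave d bits)"
    and cantor_to_cube_interleave: "p \<in> {1..d} \<Longrightarrow>
      cantor_to_cube d (digit_value 3 (interleave d bits)) p = digit_value 2 (\<lambda>k. bits p (Suc k))"
proof -
  show c: "cantor_digits (interleave d bits)"
    unfolding cantor_digits_def
  proof
    fix i
    have "i mod d + 1 \<in> {1..d}"
      using d by (simp add: Suc_leI)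
    then have "bits (i mod d + 1) (i div d + 1) < 2"
      using bits by blast
    then show "interleave d bits i \<in> {0, 2}"
      unfolding interleave_def by (auto dest: less_2_cases)
  qed
  show "cantor_to_cube d (digit_value 3 (interleave d bits)) p = digit_value 2 (\<lambda>k. bits p (Suc k))"
    if p: "p \<in> {1..d}"
  proof -
    obtain q where "p = Suc q" "q < d"
      using p by (cases p) auto
    then show ?thesis
      unfolding cantor_to_cube_def cantor_digit_digit_value[OF c] by (simp add: interleave_index)
  qed
qed

lemma cantor_to_cube_dist_le:
  assumes d: "d \<ge> 1" and z: "z \<in> cantor_set" and z': "z' \<in> cantor_set"
    and agree: "\<forall>k<m. cantor_digit z k = cantor_digit z' k"
  shows "dist_inf d (cantor_to_cube d z) (cantor_to_cube d z') \<le> 1 / 2 ^ (m div d)"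
proof (rule dist_inf_le[OF d])
  fix p assume p: "p \<in> {1..d}"
  have "d * k + (p - 1) < m" if "k < m div d" for k
  proof -
    have "d * k + (p - 1) < d * Suc k"
      using p by auto
    also have "\<dots> \<le> d * (m div d)"
      using that by (intro mult_le_mono2) simp
    also have "\<dots> \<le> m"
      by simp
    finally show ?thesis .
  qed
  then show "\<bar>cantor_to_cube d z p - cantor_to_cube d z' p\<bar> \<le> 1 / 2 ^ (m div d)"
    using digit_value_close[of 2 _ _ "m div d"] cantor_digit_half_less[OF z]
      cantor_digit_half_less[OF z'] p agree
    unfolding cantor_to_cube_def by simp
qed

lemma inverse_three_pow_powr:
  "(1 / 3 ^ n) powr (ln 2 / (real d * ln 3)) = 2 powr (- real n / real d)"
proof -
  have "ln (1 / 3 ^ n) = - real n * ln (3::real)"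
    by (simp add: ln_div ln_realpow)
  then show ?thesis
    by (simp add: powr_def)
qed

lemma inverse_two_pow_div_le:
  assumes "d \<ge> 1"
  shows "1 / 2 ^ (m div d) \<le> 2 * 2 powr (- real (Suc m) / real d)"
proof -
  have "Suc m \<le> d * Suc (m div d)"
    using assms mult_div_mod_eq[of d m] mod_less_divisor[of d m] by (simp only: mult_Suc_right) linarith
  then have "real (Suc m) \<le> real d * (1 + real (m div d))"
    by (metis of_nat_Suc of_nat_le_iff of_nat_mult add.commute)
  then have "- real (m div d) \<le> 1 + - real (Suc m) / real d"
    using assms by (simp add: field_simps)
  have "1 / 2 ^ (m div d) = 2 powr (- real (m div d))"
    by (simp add: powr_minus powr_realpow divide_inverse)
  also have "\<dots> \<le> 2 powr (1 + - real (Suc m) / real d)"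
    using \<open>- real (m div d) \<le> _\<close> by (rule powr_mono) simp
  also have "\<dots> = 2 * 2 powr (- real (Suc m) / real d)"
    unfolding powr_add by simp
  finally show ?thesis .
qed

lemma cantor_to_cube_holder:
  assumes d: "d \<ge> 1" and z: "z \<in> cantor_set" and z': "z' \<in> cantor_set"
  shows "dist_inf d (cantor_to_cube d z) (cantor_to_cube d z')
    \<le> 2 * \<bar>z - z'\<bar> powr (ln 2 / (real d * ln 3))"
proof (cases "z = z'")
  case True
  then have "dist_inf d (cantor_to_cube d z) (cantor_to_cube d z') \<le> 0"
    by (intro dist_inf_le[OF d]) simp
  then show ?thesis
    by (smt (verit) powr_ge_zero)
next
  case False
  then have "cantor_digit z \<noteq> cantor_digit z'"
    using cantor_digit(2)[OF z] cantor_digit(2)[OF z'] by metis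
  then obtain m where differ: "cantor_digit z m \<noteq> cantor_digit z' m"
    and agree: "\<forall>k<m. cantor_digit z k = cantor_digit z' k"
    by (rule first_difference)
  have sep: "1 / 3 ^ Suc m \<le> \<bar>z - z'\<bar>"
    using digit_value_cantor_separation[OF cantor_digit(1)[OF z] cantor_digit(1)[OF z'] differ agree]
    by (simp add: cantor_digit(2) z z')
  have "dist_inf d (cantor_to_cube d z) (cantor_to_cube d z') \<le> 1 / 2 ^ (m div d)"
    by (rule cantor_to_cube_dist_le[OF d z z' agree])
  also have "\<dots> \<le> 2 * (1 / 3 ^ Suc m) powr (ln 2 / (real d * ln 3))"
    unfolding inverse_three_pow_powr by (rule inverse_two_pow_div_le[OF d])
  also have "\<dots> \<le> 2 * \<bar>z - z'\<bar> powr (ln 2 / (real d * ln 3))"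
    using sep by (intro mult_left_mono powr_mono2) auto
  finally show ?thesis .
qed

lemma unit_cube_coord: "x \<in> unit_cube d \<Longrightarrow> p \<in> {1..d} \<Longrightarrow> x p \<in> {0..1}"
  unfolding unit_cube_def by blast

lemma binary_expansion_choiceD:
  assumes "binary_expansion_choice a" and "t \<in> {0..1}"
  shows "\<forall>j. a t j < 2" and "digit_value 2 (\<lambda>k. a t (Suc k)) = t"
proof -
  have "\<forall>j. a t j \<in> {0, 1}" and sums: "(\<lambda>j. real (a t (Suc j)) / 2 ^ Suc j) sums t"
    using assms unfolding binary_expansion_choice_def by auto
  then show "\<forall>j. a t j < 2"
    by (simp add: less_2_cases_iff)
  show "digit_value 2 (\<lambda>k. a t (Suc k)) = t"
    unfolding digit_value_def using sums_unique[OF sums] by simp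
qed

lemma cantor_to_cube_surj:
  assumes d: "d \<ge> 1" and a: "binary_expansion_choice a" and x: "x \<in> unit_cube d"
  shows "\<exists>z\<in>cantor_set. cantor_to_cube d z = x"
proof -
  define z where "z = digit_value 3 (interleave d (\<lambda>p. a (x p)))"
  have bits: "\<forall>p\<in>{1..d}. \<forall>j. a (x p) j < 2"
    using binary_expansion_choiceD(1)[OF a unit_cube_coord[OF x]] by blast
  have z: "z \<in> cantor_set"
    unfolding z_def cantor_set_iff using cantor_digits_interleave[OF d bits] by blast
  have "cantor_to_cube d z = x"
  proof (rule PiE_ext)
    show "cantor_to_cube d z \<in> PiE {1..d} (\<lambda>_. {0..1})" "x \<in> PiE {1..d} (\<lambda>_. {0..1})"
      using cantor_to_cube_in_unit_cube[OF z] x unfolding unit_cube_def by auto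
    show "cantor_to_cube d z p = x p" if "p \<in> {1..d}" for p
      unfolding z_def cantor_to_cube_interleave[OF d bits that]
      using binary_expansion_choiceD(2)[OF a unit_cube_coord[OF x that]] .
  qed
  with z show ?thesis
    by blast
qed

lemma phiK_sum_eq_digit_value:
  assumes d: "d \<ge> 1"
  shows "(\<Sum>p=1..d. phiK d a K (x p) / 3 ^ p)
    = digit_value 3 (interleave d (\<lambda>p j. if j \<le> K then a (x p) j else 0))"
    (is "_ = digit_value 3 ?c")
proof -
  have vanish: "?c i = 0" if "i \<notin> {..<K * d}" for i
  proof -
    have "K * d div d \<le> i div d"
      using that by (intro div_le_mono) simp
    then show ?thesis
      using d by (simp add: interleave_def)
  qed
  have "(\<lambda>i. real (?c i) / 3 ^ Suc i) sums (\<Sum>i<K * d. real (?c i) / 3 ^ Suc i)"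
    by (rule sums_finite) (simp_all add: vanish)
  then have "digit_value 3 ?c = (\<Sum>i<K * d. real (?c i) / 3 ^ Suc i)"
    by (simp add: digit_value_def sums_iff)
  also have "\<dots> = (\<Sum>j<K. \<Sum>q<d. real (?c (d * j + q)) / 3 ^ Suc (d * j + q))"
    by (simp add: sum_mult_product add.commute mult.commute)
  also have "\<dots> = (\<Sum>j<K. \<Sum>q<d. 2 * real (a (x (Suc q)) (Suc j)) / 3 ^ (d * j) / 3 ^ Suc q)"
    by (intro sum.cong refl) (simp add: interleave_index power_add)
  also have "\<dots> = (\<Sum>p=1..d. phiK d a K (x p) / 3 ^ p)"
    unfolding phiK_def by (simp add: sum.swap[of _ "{..<K}"] sum.atLeast1_atMost_eq sum_divide_distrib)
  finally show ?thesis ..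
qed

lemma cantor_to_cube_approx:
  fixes K :: nat
  assumes d: "d \<ge> 1" and a: "binary_expansion_choice a" and x: "x \<in> unit_cube d"
  defines "z \<equiv> \<Sum>p=1..d. phiK d a K (x p) / 3 ^ p"
  shows "z \<in> cantor_set" and "dist_inf d x (cantor_to_cube d z) \<le> 1 / 2 ^ K"
proof -
  define bits where "bits p j = (if j \<le> K then a (x p) j else 0)" for p j
  have a_bits: "\<forall>j. a (x p) j < 2" if "p \<in> {1..d}" for p
    using binary_expansion_choiceD(1)[OF a unit_cube_coord[OF x that]] .
  then have bits: "\<forall>p\<in>{1..d}. \<forall>j. bits p j < 2"
    by (simp add: bits_def)
  have z: "z = digit_value 3 (interleave d bits)"
    unfolding z_def bits_def by (rule phiK_sum_eq_digit_value[OF d])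
  show "z \<in> cantor_set"
    unfolding z cantor_set_iff using cantor_digits_interleave[OF d bits] by blast
  show "dist_inf d x (cantor_to_cube d z) \<le> 1 / 2 ^ K"
  proof (rule dist_inf_le[OF d])
    fix p assume p: "p \<in> {1..d}"
    have "\<bar>digit_value 2 (\<lambda>k. a (x p) (Suc k)) - digit_value 2 (\<lambda>k. bits p (Suc k))\<bar> \<le> 1 / 2 ^ K"
      using digit_value_close[of 2 "\<lambda>k. a (x p) (Suc k)" "\<lambda>k. bits p (Suc k)" K] a_bits[OF p] bits p
      by (simp add: bits_def)
    then show "\<bar>x p - cantor_to_cube d z p\<bar> \<le> 1 / 2 ^ K"
      unfolding z cantor_to_cube_interleave[OF d bits p]
        binary_expansion_choiceD(2)[OF a unit_cube_coord[OF x p]] by simp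
  qed
qed

lemma inverse_two_pow_powr_le:
  assumes "0 \<le> \<beta>" and "0 \<le> c"
  shows "(1 / 2 ^ K) powr \<beta> \<le> 2 powr (- \<beta> * (real K - c))"
proof -
  have "1 / (2::real) ^ K = 2 powr (- real K)"
    by (simp add: powr_minus powr_realpow divide_inverse)
  then have "(1 / 2 ^ K) powr \<beta> = 2 powr (- \<beta> * real K)"
    by (simp add: powr_powr mult.commute)
  also have "\<dots> \<le> 2 powr (- \<beta> * (real K - c))"
    using assms by (intro powr_mono) (auto simp: algebra_simps)
  finally show ?thesis .
qed

theorem lemma4:
  fixes d K :: nat and a :: "real \<Rightarrow> nat \<Rightarrow> nat"
    and f :: "(nat \<Rightarrow> real) \<Rightarrow> real" and \<beta> Q :: real
  assumes "d \<ge> 2" and "K \<ge> 1"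
    and "binary_expansion_choice a"
    and "0 < \<beta>" and "\<beta> \<le> 1" and "Q \<ge> 0"
    and "\<forall>x\<in>unit_cube d. \<forall>y\<in>unit_cube d. \<bar>f x - f y\<bar> \<le> Q * dist_inf d x y powr \<beta>"
  shows "\<exists>g :: real \<Rightarrow> real.
     (\<forall>x\<in>cantor_set. \<forall>y\<in>cantor_set.
        \<bar>g x - g y\<bar> \<le> 2 powr \<beta> * Q * \<bar>x - y\<bar> powr (\<beta> * ln 2 / (real d * ln 3))) \<and>
     (\<forall>x\<in>unit_cube d. (\<Sum>p=1..d. phiK d a K (x p) / 3 ^ p) \<in> cantor_set) \<and>
     (\<forall>x\<in>unit_cube d.
        \<bar>f x - g (\<Sum>p=1..d. phiK d a K (x p) / 3 ^ p)\<bar> \<le> Q * 2 powr (- \<beta> * (real K - 4))) \<and>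
     (SUP x\<in>unit_cube d. \<bar>f x\<bar>) = (SUP z\<in>cantor_set. \<bar>g z\<bar>)"
proof -
  have d: "d \<ge> 1"
    using assms(1) by simp
  have f_bound: "\<bar>f x - f y\<bar> \<le> Q * t powr \<beta>"
    if "x \<in> unit_cube d" "y \<in> unit_cube d" "dist_inf d x y \<le> t" for x y t
    using assms(4,6,7) that dist_inf_nonneg[OF d]
    by (meson mult_left_mono order.trans powr_mono2 less_imp_le)
  define g where "g z = f (cantor_to_cube d z)" for z
  have "\<bar>g z - g z'\<bar> \<le> 2 powr \<beta> * Q * \<bar>z - z'\<bar> powr (\<beta> * ln 2 / (real d * ln 3))"
    if "z \<in> cantor_set" "z' \<in> cantor_set" for z z'
    using f_bound[OF cantor_to_cube_in_unit_cube cantor_to_cube_in_unit_cube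
        cantor_to_cube_holder[OF d that]] that
    by (simp add: g_def powr_mult powr_powr mult_ac)
  moreover have "\<bar>f x - g (\<Sum>p=1..d. phiK d a K (x p) / 3 ^ p)\<bar> \<le> Q * 2 powr (- \<beta> * (real K - 4))"
    if x: "x \<in> unit_cube d" for x
    using f_bound[OF x cantor_to_cube_in_unit_cube cantor_to_cube_approx(2)[OF d assms(3) x]]
      cantor_to_cube_approx(1)[OF d assms(3) x] inverse_two_pow_powr_le[of \<beta> 4 K] assms(4,6)
    unfolding g_def by (meson mult_left_mono order.trans less_imp_le zero_le_numeral)
  moreover have "cantor_to_cube d ` cantor_set = unit_cube d"
    using cantor_to_cube_in_unit_cube cantor_to_cube_surj[OF d assms(3)] by blast
  then have "(SUP x\<in>unit_cube d. \<bar>f x\<bar>) = (SUP z\<in>cantor_set. \<bar>g z\<bar>)"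
    unfolding g_def by (metis image_image)
  ultimately show ?thesis
    using cantor_to_cube_approx(1)[OF d assms(3)] by blast
qed

end
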